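(* Let $S_{r,N}$ be a nontrivial atomic exponential Puiseux semiring. Then $|\Delta(S_{r,N})|=1$ if and only if $N=\mathbb{N}$.
   Context: $\mathbb{N}=\{0,1,2,\dots\}$. A numerical monoid $N$ is an additive submonoid of $\mathbb{N}$ with finite complement in $\mathbb{N}$. For $r\in\mathbb{Q}_{>0}$ write $r=\mathsf{n}(r)/\mathsf{d}(r)$ in lowest terms. The exponential Puiseux semiring $S_{r,N}$ is the additive submonoid of $\mathbb{Q}_{\ge0}$ generated by $\{r^k:k\in N\}$; it is nontrivial if $r\notin\mathbb{N}$, and then atomic iff $\mathsf{n}(r)>1$. For an atomic monoid $M$ and $x\in M$ with set of lengths $\mathsf{L}(x)$, a positive integer $d$ is a distance of $x$ if $\mathsf{L}(x)\cap\{l,\dots,l+d\}=\{l,l+d\}$ for some $l\in\mathsf{L}(x)$; $\Delta(M)$ is the union over $x\in M$ of the sets of distances of $x$. *)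

theory Defs
  imports Complex_Main "HOL-Library.Multiset"
begin

definition numerical_monoid :: "nat set \<Rightarrow> bool" where
  "numerical_monoid N \<longleftrightarrow> 0 \<in> N \<and> (\<forall>a\<in>N. \<forall>b\<in>N. a + b \<in> N) \<and> finite (UNIV - N)"

inductive_set gen_monoid :: "rat set \<Rightarrow> rat set" for G :: "rat set" where
  zero: "0 \<in> gen_monoid G"
| gen: "g \<in> G \<Longrightarrow> g \<in> gen_monoid G"
| add: "x \<in> gen_monoid G \<Longrightarrow> y \<in> gen_monoid G \<Longrightarrow> x + y \<in> gen_monoid G"

definition exp_puiseux :: "rat \<Rightarrow> nat set \<Rightarrow> rat set" where
  "exp_puiseux r N = gen_monoid {r ^ k | k. k \<in> N}"

definition is_unit_in :: "rat set \<Rightarrow> rat \<Rightarrow> bool" where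
  "is_unit_in M u \<longleftrightarrow> u \<in> M \<and> - u \<in> M"

definition atoms :: "rat set \<Rightarrow> rat set" where
  "atoms M = {a \<in> M. \<not> is_unit_in M a \<and>
      (\<forall>b\<in>M. \<forall>c\<in>M. a = b + c \<longrightarrow> is_unit_in M b \<or> is_unit_in M c)}"

definition atomic :: "rat set \<Rightarrow> bool" where
  "atomic M \<longleftrightarrow> (\<forall>x\<in>M. \<not> is_unit_in M x \<longrightarrow>
      (\<exists>m. set_mset m \<subseteq> atoms M \<and> m \<noteq> {#} \<and> sum_mset m = x))"

(* set of lengths (for reduced monoids: factorizations = multisets of atoms) *)
definition lengths :: "rat set \<Rightarrow> rat \<Rightarrow> nat set" where
  "lengths M x = {size m | m. set_mset m \<subseteq> atoms M \<and> sum_mset m = x}"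

definition distances :: "rat set \<Rightarrow> rat \<Rightarrow> nat set" where
  "distances M x = {d. d > 0 \<and> (\<exists>l\<in>lengths M x. l + d \<in> lengths M x \<and>
      (\<forall>j. l < j \<and> j < l + d \<longrightarrow> j \<notin> lengths M x))}"

definition Delta :: "rat set \<Rightarrow> nat set" where
  "Delta M = (\<Union>x\<in>M. distances M x)"

end

theory Submission
  imports Defs
begin

(* Write r = n/d in lowest terms. The relation d r^(j+1) = n r^j lets one trade d atoms r^(j+1)
   for n atoms r^j, changing the length of a factorization by n - d. Trading terminates in a
   canonical factorization (every positive exponent used fewer than d times), which is unique
   because it is a mixed-radix expansion; hence all lengths of an element are congruent modulo
   |d - n|, and |d - n| occurs as the distance between the factorizations n r^K and d r^(K+1).
   If N is all of nat, one trade along the way to the canonical factorization produces the next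
   length, so |d - n| is the only distance. If 1 is not in N, the element n^K = d^K r^K has
   canonical factorization n^K r^0, which no factorization reaches in exactly one trade, so the
   lengths next to n^K differ from it by at least 2|d - n|. For n = 1 there are no atoms. *)

lemma gen_monoid_eq: "gen_monoid G = {sum_mset m | m. set_mset m \<subseteq> G}"
proof (intro set_eqI iffI)
  fix x assume "x \<in> gen_monoid G"
  then show "x \<in> {sum_mset m | m. set_mset m \<subseteq> G}"
  proof (induction rule: gen_monoid.induct)
    case zero show ?case by (auto intro!: exI[of _ "{#}"])
  next
    case (gen g) then show ?case by (auto intro!: exI[of _ "{#g#}"])
  next
    case (add x y)
    then obtain mx my where "set_mset mx \<subseteq> G" "x = sum_mset mx" "set_mset my \<subseteq> G" "y = sum_mset my"
      by blast
    then show ?case by (auto intro!: exI[of _ "mx + my"])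
  qed
next
  fix x assume "x \<in> {sum_mset m | m. set_mset m \<subseteq> G}"
  then obtain m where "set_mset m \<subseteq> G" "x = sum_mset m" by blast
  then show "x \<in> gen_monoid G"
    by (induction m arbitrary: x) (auto intro: gen_monoid.intros)
qed

lemma set_mset_subset_image_iff:
  "set_mset m \<subseteq> f ` S \<longleftrightarrow> (\<exists>A. set_mset A \<subseteq> S \<and> m = image_mset f A)"
proof
  show "set_mset m \<subseteq> f ` S \<Longrightarrow> \<exists>A. set_mset A \<subseteq> S \<and> m = image_mset f A"
  proof (induction m)
    case (add x m)
    then obtain a A where "a \<in> S" "x = f a" "set_mset A \<subseteq> S" "m = image_mset f A" by auto
    then show ?case by (intro exI[of _ "add_mset a A"]) auto
  qed simp
qed (metis image_mono set_image_mset)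

lemma numerical_monoid_cofinite:
  assumes "numerical_monoid N"
  obtains B where "\<And>j. B \<le> j \<Longrightarrow> j \<in> N"
proof -
  have "finite (UNIV - N)" using assms unfolding numerical_monoid_def by blast
  then obtain B where "\<forall>j\<in>UNIV - N. j < B" using finite_nat_set_iff_bounded by blast
  then show thesis using that by (meson DiffI UNIV_I not_le)
qed

lemma numerical_monoid_one_iff:
  assumes "numerical_monoid N"
  shows "1 \<in> N \<longleftrightarrow> N = UNIV"
proof
  assume one: "1 \<in> N"
  have "k \<in> N" for k
  proof (induction k)
    case 0 show ?case using assms unfolding numerical_monoid_def by blast
  next
    case (Suc k) then show ?case using assms one unfolding numerical_monoid_def by force
  qed
  then show "N = UNIV" by blast
qed simp

lemma nearest_element_between:
  fixes L :: "nat set"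
  assumes "a \<in> L" "b \<in> L" "a \<noteq> b"
  obtains c where "c \<in> L" "c \<noteq> a" "min a b \<le> c" "c \<le> max a b"
    "\<And>j. min a c < j \<Longrightarrow> j < max a c \<Longrightarrow> j \<notin> L"
proof (cases "a < b")
  case True
  define C where "C = {j \<in> L. a < j \<and> j \<le> b}"
  have "finite C" "b \<in> C" using assms True unfolding C_def by auto
  then have "Min C \<in> C" "\<And>j. j \<in> C \<Longrightarrow> Min C \<le> j" by (auto intro: Min_in)
  then show thesis using that[of "Min C"] True unfolding C_def by fastforce
next
  case False
  define C where "C = {j \<in> L. b \<le> j \<and> j < a}"
  have "finite C" "b \<in> C" using assms False unfolding C_def by auto
  then have "Max C \<in> C" "\<And>j. j \<in> C \<Longrightarrow> j \<le> Max C" by (auto intro: Max_in)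
  then show thesis using that[of "Max C"] False unfolding C_def by fastforce
qed

lemma nearest_length_in_Delta:
  assumes "x \<in> M" "a \<in> lengths M x" "b \<in> lengths M x" "a \<noteq> b"
  obtains c where "c \<in> lengths M x" "c \<noteq> a" "min a b \<le> c" "c \<le> max a b"
    "nat \<bar>int c - int a\<bar> \<in> Delta M"
proof -
  obtain c where c: "c \<in> lengths M x" "c \<noteq> a" "min a b \<le> c" "c \<le> max a b"
    and gap: "\<And>j. min a c < j \<Longrightarrow> j < max a c \<Longrightarrow> j \<notin> lengths M x"
    using nearest_element_between[OF assms(2-4)] by blast
  have "max a c - min a c \<in> distances M x"
    unfolding distances_def using assms(2) c gap
    by (cases "a < c") (auto intro!: bexI[of _ "min a c"])
  then have "max a c - min a c \<in> Delta M" using assms(1) unfolding Delta_def by blast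
  moreover have "max a c - min a c = nat \<bar>int c - int a\<bar>" by (cases "a < c") auto
  ultimately show thesis using that c by simp
qed

lemma sum_power_mult_Suc:
  fixes c :: "nat \<Rightarrow> nat"
  shows "(\<Sum>j\<le>Suc D. c j * n ^ j * d ^ (Suc D - j))
    = d * (\<Sum>j\<le>D. c j * n ^ j * d ^ (D - j)) + c (Suc D) * n ^ Suc D"
proof -
  have "(\<Sum>j\<le>D. c j * n ^ j * d ^ (Suc D - j)) = d * (\<Sum>j\<le>D. c j * n ^ j * d ^ (D - j))"
    unfolding sum_distrib_left by (rule sum.cong) (auto simp: Suc_diff_le)
  then show ?thesis by simp
qed

lemma sum_power_mult_digits_unique:
  fixes c c' :: "nat \<Rightarrow> nat"
  assumes "coprime n d" "0 < d" "\<And>j. 0 < j \<Longrightarrow> c j < d" "\<And>j. 0 < j \<Longrightarrow> c' j < d"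
    and "(\<Sum>j\<le>D. c j * n ^ j * d ^ (D - j)) = (\<Sum>j\<le>D. c' j * n ^ j * d ^ (D - j))"
    and "j \<le> D"
  shows "c j = c' j"
  using assms(5,6)
proof (induction D arbitrary: j)
  case 0 then show ?case by simp
next
  case (Suc D)
  let ?S = "\<lambda>c. \<Sum>j\<le>D. c j * n ^ j * d ^ (D - j)"
  have eqn: "d * ?S c + c (Suc D) * n ^ Suc D = d * ?S c' + c' (Suc D) * n ^ Suc D"
    using Suc.prems(1) by (simp only: sum_power_mult_Suc)
  from arg_cong[OF this, of int] have "int d * int (?S c) + int (c (Suc D)) * int n ^ Suc D
      = int d * int (?S c') + int (c' (Suc D)) * int n ^ Suc D"
    by (simp only: of_nat_add of_nat_mult of_nat_power)
  then have "(int (c (Suc D)) - int (c' (Suc D))) * int n ^ Suc D = int d * (int (?S c') - int (?S c))"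
    by (simp add: algebra_simps)
  then have "int d dvd (int (c (Suc D)) - int (c' (Suc D))) * int n ^ Suc D"
    by (metis dvd_triv_left)
  moreover have "coprime (int d) (int n ^ Suc D)" using assms(1) by (simp add: coprime_commute)
  ultimately have dvd: "int d dvd int (c (Suc D)) - int (c' (Suc D))"
    using coprime_dvd_mult_left_iff by blast
  have top: "c (Suc D) = c' (Suc D)"
  proof (rule ccontr)
    assume "c (Suc D) \<noteq> c' (Suc D)"
    then have "int (c (Suc D)) - int (c' (Suc D)) \<noteq> 0" by simp
    from dvd_imp_le_int[OF this dvd] assms(3,4)[of "Suc D"] show False by simp
  qed
  with eqn assms(2) have "?S c = ?S c'" by simp
  with top Suc.IH Suc.prems(2) show ?case by (cases "j = Suc D") auto
qed

locale puiseux_ratio =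
  fixes n d :: nat and r :: rat
  assumes r_eq: "r = of_nat n / of_nat d" and denom_ge_2: "2 \<le> d" and numer_pos: "0 < n"
    and coprime_numer_denom: "coprime n d"
begin

(* Elements of S_{r,N} are the values of multisets of exponents in N; for n \<ge> 2 these
   multisets are exactly the factorizations. *)
definition val :: "nat multiset \<Rightarrow> rat" where
  "val A = (\<Sum>a\<in>#A. r ^ a)"

definition \<delta> :: nat where
  "\<delta> = nat \<bar>int d - int n\<bar>"

lemma r_pos: "0 < r"
  using r_eq denom_ge_2 numer_pos by simp

lemma numer_ne_denom: "n \<noteq> d"
  using coprime_numer_denom denom_ge_2 by auto

lemma \<delta>_pos: "0 < \<delta>"
  using numer_ne_denom unfolding \<delta>_def by simp

lemma denom_times_power: "of_nat (d ^ m) * r ^ (k + m) = of_nat (n ^ m) * r ^ k"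
proof -
  have "r * of_nat d = of_nat n" using r_eq denom_ge_2 by simp
  then have "r ^ m * of_nat d ^ m = of_nat n ^ m" by (metis power_mult_distrib)
  then show ?thesis by (simp add: power_add algebra_simps)
qed

lemma val_empty [simp]: "val {#} = 0"
  and val_add_mset [simp]: "val (add_mset a A) = r ^ a + val A"
  and val_union [simp]: "val (A + B) = val A + val B"
  and val_replicate_mset [simp]: "val (replicate_mset k a) = of_nat k * r ^ a"
  by (simp_all add: val_def)

lemma val_nonneg: "0 \<le> val A"
  by (induction A) (auto simp: r_pos less_imp_le)

lemma val_pos: "A \<noteq> {#} \<Longrightarrow> 0 < val A"
  by (induction A) (auto simp: r_pos add_pos_nonneg val_nonneg)

lemma val_eq_0_iff [simp]: "val A = 0 \<longleftrightarrow> A = {#}"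
  using val_pos by force

definition trade :: "nat multiset \<Rightarrow> nat multiset \<Rightarrow> bool" where
  "trade A B \<longleftrightarrow> (\<exists>j A0. A = A0 + replicate_mset d (Suc j) \<and> B = A0 + replicate_mset n j)"

definition canonical :: "nat multiset \<Rightarrow> bool" where
  "canonical A \<longleftrightarrow> (\<forall>j. count A (Suc j) < d)"

lemma trade_val: "trade A B \<Longrightarrow> val B = val A"
  unfolding trade_def using denom_times_power[of 1] by auto

lemma trade_size: "trade A B \<Longrightarrow> int (size B) = int (size A) + (int n - int d)"
  unfolding trade_def by auto

lemma trades_val: "(trade ^^ k) A B \<Longrightarrow> val B = val A"
  by (induction k arbitrary: B) (auto dest: trade_val)

lemma trades_size: "(trade ^^ k) A B \<Longrightarrow> int (size B) = int (size A) + int k * (int n - int d)"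
proof (induction k arbitrary: B)
  case (Suc k)
  then obtain Y where "(trade ^^ k) A Y" "trade Y B" by auto
  with Suc.IH trade_size show ?case by (fastforce simp: algebra_simps)
qed simp

lemma trades_to_canonical: "\<exists>k C. (trade ^^ k) A C \<and> canonical C"
proof (induction "\<Sum>a\<in>#A. n ^ a" arbitrary: A rule: less_induct)
  case less
  show ?case
  proof (cases "canonical A")
    case True then show ?thesis by (intro exI[of _ 0] exI[of _ A]) auto
  next
    case False
    then obtain j where j: "d \<le> count A (Suc j)" unfolding canonical_def by (auto simp: not_less)
    define A0 where "A0 = A - replicate_mset d (Suc j)"
    have A: "A = A0 + replicate_mset d (Suc j)"
      unfolding A0_def using j by (intro multiset_eqI) auto
    have "n * n ^ j < d * n ^ Suc j" using denom_ge_2 numer_pos by simp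
    then have "(\<Sum>a\<in>#A0 + replicate_mset n j. n ^ a) < (\<Sum>a\<in>#A. n ^ a)" unfolding A by simp
    with less obtain k C where "(trade ^^ k) (A0 + replicate_mset n j) C" "canonical C" by blast
    moreover have "trade A (A0 + replicate_mset n j)" unfolding trade_def A by blast
    ultimately show ?thesis by (meson relpowp_Suc_I2)
  qed
qed

lemma val_mult_denom_power:
  assumes "set_mset A \<subseteq> {..D}"
  shows "val A * of_nat d ^ D = of_nat (\<Sum>j\<le>D. count A j * n ^ j * d ^ (D - j))"
  using assms
proof (induction A)
  case (add a A)
  then have a: "a \<le> D" and A: "set_mset A \<subseteq> {..D}" by auto
  have "(\<Sum>j\<le>D. count (add_mset a A) j * n ^ j * d ^ (D - j))
      = (\<Sum>j\<le>D. count A j * n ^ j * d ^ (D - j) + (if j = a then n ^ j * d ^ (D - j) else 0))"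
    by (rule sum.cong) (auto simp: algebra_simps)
  also have "\<dots> = (\<Sum>j\<le>D. count A j * n ^ j * d ^ (D - j)) + n ^ a * d ^ (D - a)"
    using a by (simp add: sum.distrib)
  finally have "(\<Sum>j\<le>D. count (add_mset a A) j * n ^ j * d ^ (D - j))
      = (\<Sum>j\<le>D. count A j * n ^ j * d ^ (D - j)) + n ^ a * d ^ (D - a)" .
  moreover have "r ^ a * of_nat d ^ D = of_nat (n ^ a * d ^ (D - a))"
  proof -
    have "of_nat d ^ D = (of_nat d ^ a * of_nat d ^ (D - a) :: rat)" using a by (simp flip: power_add)
    then show ?thesis using denom_times_power[of a 0] by (simp add: algebra_simps)
  qed
  ultimately show ?case using add.IH[OF A] by (simp add: algebra_simps)
qed simp

lemma canonical_unique:
  assumes "canonical B" "canonical C" "val B = val C"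
  shows "B = C"
proof (rule multiset_eqI)
  fix j
  define D where "D = Max (insert j (set_mset (B + C)))"
  have D: "set_mset B \<subseteq> {..D}" "set_mset C \<subseteq> {..D}" "j \<le> D"
    unfolding D_def by (auto intro: Max_ge)
  have "(\<Sum>j\<le>D. count B j * n ^ j * d ^ (D - j)) = (\<Sum>j\<le>D. count C j * n ^ j * d ^ (D - j))"
    using val_mult_denom_power[OF D(1)] val_mult_denom_power[OF D(2)] assms(3) of_nat_eq_iff
    by metis
  moreover have "\<And>j. 0 < j \<Longrightarrow> count B j < d" "\<And>j. 0 < j \<Longrightarrow> count C j < d"
    using assms(1,2) unfolding canonical_def by (metis gr0_implies_Suc)+
  ultimately show "count B j = count C j"
    using sum_power_mult_digits_unique coprime_numer_denom denom_ge_2 D(3) by simp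
qed

lemma trades_to_canonical_of_val:
  assumes "val A = val C" "canonical C"
  obtains k where "(trade ^^ k) A C"
proof -
  obtain k C' where "(trade ^^ k) A C'" "canonical C'" using trades_to_canonical by blast
  moreover have "C' = C"
    using canonical_unique[OF \<open>canonical C'\<close> assms(2)] trades_val[OF \<open>(trade ^^ k) A C'\<close>] assms(1)
    by simp
  ultimately show thesis using that by blast
qed

lemma size_congruent:
  assumes "val A = val B"
  shows "int \<delta> dvd int (size A) - int (size B)"
proof -
  obtain k C where "(trade ^^ k) A C" "canonical C" using trades_to_canonical by blast
  moreover obtain k' where "(trade ^^ k') B C"
    using trades_to_canonical_of_val[of B C] calculation assms trades_val by metis
  ultimately have "int (size A) - int (size B) = (int k - int k') * (int d - int n)"
    using trades_size[of k A C] trades_size[of k' B C] by (simp add: algebra_simps)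
  then show ?thesis unfolding \<delta>_def by simp
qed

lemma val_eq_power_imp_singleton:
  assumes "2 \<le> n" "val A = r ^ k"
  shows "A = {#k#}"
proof -
  have "canonical {#k#}" unfolding canonical_def using denom_ge_2 by auto
  then obtain m where m: "(trade ^^ m) A {#k#}"
    using trades_to_canonical_of_val assms(2) by (metis val_add_mset val_empty add_0_right)
  show ?thesis
  proof (cases m)
    case 0 with m show ?thesis by simp
  next
    case (Suc m')
    then obtain Y where "trade Y {#k#}" using m by auto
    then have "n \<le> size {#k#}" unfolding trade_def by force
    with assms(1) show ?thesis by simp
  qed
qed

lemma exp_puiseux_eq: "exp_puiseux r N = {val A | A. set_mset A \<subseteq> N}"
  unfolding exp_puiseux_def gen_monoid_eq val_def setcompr_eq_image set_mset_subset_image_iff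
  by auto

lemma val_in_exp_puiseux: "set_mset A \<subseteq> N \<Longrightarrow> val A \<in> exp_puiseux r N"
  unfolding exp_puiseux_eq by blast

lemma exp_puiseux_nonneg: "x \<in> exp_puiseux r N \<Longrightarrow> 0 \<le> x"
  unfolding exp_puiseux_eq using val_nonneg by auto

lemma is_unit_in_exp_puiseux_iff: "is_unit_in (exp_puiseux r N) x \<longleftrightarrow> x = 0"
proof
  assume "is_unit_in (exp_puiseux r N) x"
  then have "0 \<le> x" "0 \<le> - x" unfolding is_unit_in_def using exp_puiseux_nonneg by blast+
  then show "x = 0" by simp
qed (use val_in_exp_puiseux[of "{#}"] in \<open>auto simp: is_unit_in_def\<close>)

lemma atoms_exp_puiseux_iff:
  "a \<in> atoms (exp_puiseux r N) \<longleftrightarrow> a \<in> exp_puiseux r N \<and> a \<noteq> 0 \<and>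
     (\<forall>b\<in>exp_puiseux r N. \<forall>c\<in>exp_puiseux r N. a = b + c \<longrightarrow> b = 0 \<or> c = 0)"
  unfolding atoms_def is_unit_in_exp_puiseux_iff by blast

lemma atoms_exp_puiseux_subset: "atoms (exp_puiseux r N) \<subseteq> (\<lambda>k. r ^ k) ` N"
proof
  fix a assume "a \<in> atoms (exp_puiseux r N)"
  then have "a \<in> exp_puiseux r N" "a \<noteq> 0"
    and irreducible: "\<And>b c. b \<in> exp_puiseux r N \<Longrightarrow> c \<in> exp_puiseux r N \<Longrightarrow> a = b + c \<Longrightarrow> b = 0 \<or> c = 0"
    unfolding atoms_exp_puiseux_iff by auto
  then obtain A where A: "set_mset A \<subseteq> N" "a = val A" "A \<noteq> {#}"
    unfolding exp_puiseux_eq by auto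
  then obtain k A' where A': "A = add_mset k A'" by (metis multiset_cases)
  have "r ^ k = 0 \<or> val A' = 0"
    using irreducible[of "val {#k#}" "val A'"] A A' val_in_exp_puiseux[of "{#k#}" N]
      val_in_exp_puiseux[of A' N] by simp
  then have "A = {#k#}" using A' r_pos by simp
  then show "a \<in> (\<lambda>k. r ^ k) ` N" using A by simp
qed

lemma atoms_exp_puiseux:
  assumes "2 \<le> n"
  shows "atoms (exp_puiseux r N) = (\<lambda>k. r ^ k) ` N"
proof (intro equalityI atoms_exp_puiseux_subset subsetI)
  fix a assume "a \<in> (\<lambda>k. r ^ k) ` N"
  then obtain k where k: "k \<in> N" "a = r ^ k" by blast
  have "b = 0 \<or> c = 0" if bc: "b \<in> exp_puiseux r N" "c \<in> exp_puiseux r N" "a = b + c" for b c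
  proof -
    obtain B C where "b = val B" "c = val C" using bc(1,2) unfolding exp_puiseux_eq by blast
    moreover have "B + C = {#k#}"
      using val_eq_power_imp_singleton[OF assms, of "B + C" k] bc(3) k(2) calculation by simp
    ultimately show ?thesis by (auto simp: union_is_single)
  qed
  then show "a \<in> atoms (exp_puiseux r N)"
    unfolding atoms_exp_puiseux_iff using k r_pos val_in_exp_puiseux[of "{#k#}" N] by simp
qed

lemma lengths_exp_puiseux:
  assumes "2 \<le> n"
  shows "lengths (exp_puiseux r N) x = {size A | A. set_mset A \<subseteq> N \<and> val A = x}"
  unfolding lengths_def atoms_exp_puiseux[OF assms] val_def set_mset_subset_image_iff
  by (metis (no_types, opaque_lifting) size_image_mset)

lemma size_in_lengths:
  assumes "2 \<le> n" "set_mset A \<subseteq> N"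
  shows "size A \<in> lengths (exp_puiseux r N) (val A)"
  unfolding lengths_exp_puiseux[OF assms(1)] using assms(2) by blast

lemma ex_val_eq_size_add_\<delta>:
  assumes "val A = val B" "size A < size B"
  obtains Y where "val Y = val A" "size Y = size A + \<delta>"
proof -
  obtain kA C where kA: "(trade ^^ kA) A C" and "canonical C" using trades_to_canonical by blast
  moreover obtain kB where kB: "(trade ^^ kB) B C"
    using trades_to_canonical_of_val[of B C] calculation assms(1) trades_val by metis
  ultimately have sizes: "int (size C) = int (size A) + int kA * (int n - int d)"
    "int (size C) = int (size B) + int kB * (int n - int d)"
    using trades_size[OF kA] trades_size[OF kB] by auto
  then have pos: "0 < (int kA - int kB) * (int n - int d)" using assms(2) by (simp add: algebra_simps)
  show thesis
  proof (cases "n < d")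
    case True
    with pos have "kA < kB" by (simp add: zero_less_mult_iff)
    with kB have "(trade ^^ (kB - Suc kA + Suc kA)) B C" by simp
    then obtain Y where Y: "(trade ^^ (kB - Suc kA)) B Y" "(trade ^^ Suc kA) Y C"
      unfolding relpowp_add by auto
    have "int (size Y) = int (size A) + (int d - int n)"
      using sizes(1) trades_size[OF Y(2)] by (simp add: algebra_simps)
    moreover have "val Y = val A" using trades_val[OF Y(1)] assms(1) by simp
    ultimately show thesis using that[of Y] True unfolding \<delta>_def by simp
  next
    case False
    with numer_ne_denom have "d < n" by simp
    with pos have "0 < kA" by (simp add: zero_less_mult_iff)
    with kA obtain Y where "trade A Y" by (metis Suc_pred relpowp_Suc_D2)
    with \<open>d < n\<close> trade_size[of A Y] trade_val[of A Y] show thesis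
      using that[of Y] unfolding \<delta>_def by simp
  qed
qed

lemma \<delta>_in_Delta:
  assumes "2 \<le> n" "K \<in> N" "Suc K \<in> N"
  shows "\<delta> \<in> Delta (exp_puiseux r N)"
proof -
  let ?A = "replicate_mset n K" and ?B = "replicate_mset d (Suc K)"
  have "set_mset ?A \<subseteq> N" "set_mset ?B \<subseteq> N" using assms(2,3) numer_pos denom_ge_2 by auto
  moreover have "val ?B = val ?A" using denom_times_power[of 1 K] by simp
  ultimately have x: "val ?A \<in> exp_puiseux r N" "n \<in> lengths (exp_puiseux r N) (val ?A)"
    "d \<in> lengths (exp_puiseux r N) (val ?A)"
    using val_in_exp_puiseux size_in_lengths[OF assms(1)] by (metis size_replicate_mset)+
  obtain c where c: "c \<in> lengths (exp_puiseux r N) (val ?A)" "c \<noteq> n" "min n d \<le> c" "c \<le> max n d"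
    and Delta: "nat \<bar>int c - int n\<bar> \<in> Delta (exp_puiseux r N)"
    using nearest_length_in_Delta[OF x numer_ne_denom] by blast
  obtain C where "size C = c" "val C = val ?A"
    using c(1) unfolding lengths_exp_puiseux[OF assms(1)] by auto
  then have "int \<delta> dvd int c - int n" using size_congruent[of C ?A] by simp
  moreover have "int c - int n \<noteq> 0" using c(2) by simp
  ultimately have "int \<delta> \<le> \<bar>int c - int n\<bar>" using dvd_imp_le_int by (metis abs_of_nat)
  moreover have "\<bar>int c - int n\<bar> \<le> int \<delta>" using c(3,4) unfolding \<delta>_def by auto
  ultimately have "\<bar>int c - int n\<bar> = int \<delta>" by simp
  with Delta show ?thesis by simp
qed

lemma Delta_exp_puiseux_UNIV:
  assumes "2 \<le> n"
  shows "Delta (exp_puiseux r UNIV) = {\<delta>}"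
proof (intro equalityI subsetI)
  fix e assume "e \<in> Delta (exp_puiseux r UNIV)"
  then obtain x l where "0 < e" and l: "l \<in> lengths (exp_puiseux r UNIV) x"
    "l + e \<in> lengths (exp_puiseux r UNIV) x"
    and gap: "\<And>j. l < j \<Longrightarrow> j < l + e \<Longrightarrow> j \<notin> lengths (exp_puiseux r UNIV) x"
    unfolding Delta_def distances_def by blast
  obtain A B where AB: "size A = l" "size B = l + e" "val A = x" "val B = x"
    using l unfolding lengths_exp_puiseux[OF assms] by auto
  have "int \<delta> dvd int e" using size_congruent[of B A] AB by simp
  with \<open>0 < e\<close> have "\<delta> \<le> e" by (simp add: dvd_imp_le)
  moreover obtain Y where "val Y = x" "size Y = l + \<delta>"
    using ex_val_eq_size_add_\<delta>[of A B] AB \<open>0 < e\<close> by auto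
  then have "l + \<delta> \<in> lengths (exp_puiseux r UNIV) x" using size_in_lengths[OF assms, of Y] by auto
  then have "\<not> \<delta> < e" using gap[of "l + \<delta>"] \<delta>_pos by auto
  ultimately show "e \<in> {\<delta>}" by simp
qed (use \<delta>_in_Delta[OF assms, of 0] in simp)

lemma trade_to_zeros_imp_one_mem:
  assumes "trade C (replicate_mset m 0)"
  shows "1 \<in># C"
proof -
  obtain j C0 where C: "C = C0 + replicate_mset d (Suc j)" and "replicate_mset m 0 = C0 + replicate_mset n j"
    using assms unfolding trade_def by blast
  then have "j \<in># replicate_mset m 0" using numer_pos by (metis in_replicate_mset union_iff neq0_conv)
  then have "j = 0" by (simp split: if_splits)
  with C denom_ge_2 show ?thesis by simp
qed

lemma other_distance_in_Delta:
  assumes "2 \<le> n" "0 \<in> N" "1 \<notin> N" "K \<in> N" "0 < K"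
  obtains e where "e \<in> Delta (exp_puiseux r N)" "e \<noteq> \<delta>"
proof -
  let ?A = "replicate_mset (n ^ K) 0" and ?B = "replicate_mset (d ^ K) K"
  have "set_mset ?A \<subseteq> N" "set_mset ?B \<subseteq> N" using assms(2,4) by auto
  moreover have "val ?B = val ?A" using denom_times_power[of K 0] by simp
  ultimately have x: "val ?A \<in> exp_puiseux r N" "n ^ K \<in> lengths (exp_puiseux r N) (val ?A)"
    "d ^ K \<in> lengths (exp_puiseux r N) (val ?A)"
    using val_in_exp_puiseux size_in_lengths[OF assms(1)] by (metis size_replicate_mset)+
  have "n ^ K \<noteq> d ^ K" using numer_ne_denom assms(5) by (simp add: power_eq_iff_eq_base)
  then obtain c where c: "c \<in> lengths (exp_puiseux r N) (val ?A)" "c \<noteq> n ^ K"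
    and Delta: "nat \<bar>int c - int (n ^ K)\<bar> \<in> Delta (exp_puiseux r N)"
    using nearest_length_in_Delta[OF x] by blast
  obtain C where C: "size C = c" "set_mset C \<subseteq> N" "val C = val ?A"
    using c(1) unfolding lengths_exp_puiseux[OF assms(1)] by auto
  have "canonical ?A" unfolding canonical_def using denom_ge_2 by simp
  then obtain k where k: "(trade ^^ k) C ?A" using trades_to_canonical_of_val C(3) by blast
  have "k \<noteq> 1" \<comment> \<open>a single trade onto ?A would use the exponent 1\<close>
  proof
    assume "k = 1"
    with k have "trade C ?A" by (metis relpowp_1)
    then have "1 \<in># C" by (rule trade_to_zeros_imp_one_mem)
    with C(2) assms(3) show False by blast
  qed
  moreover have "int c - int (n ^ K) = int k * (int d - int n)"
    using trades_size[OF k] C(1) by (simp add: algebra_simps)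
  ultimately have "\<bar>int c - int (n ^ K)\<bar> \<noteq> \<bar>int d - int n\<bar>"
    using numer_ne_denom by (simp add: abs_mult mult_cancel_right2)
  then have "nat \<bar>int c - int (n ^ K)\<bar> \<noteq> \<delta>"
    unfolding \<delta>_def by (metis abs_ge_zero eq_nat_nat_iff)
  with Delta that show thesis by blast
qed

lemma not_atomic_if_numer_eq_1:
  assumes "n = 1" "numerical_monoid N"
  shows "\<not> atomic (exp_puiseux r N)"
proof
  assume atomic: "atomic (exp_puiseux r N)"
  obtain B where B: "\<And>j. B \<le> j \<Longrightarrow> j \<in> N" using numerical_monoid_cofinite[OF assms(2)] by blast
  have "0 \<in> N" using assms(2) unfolding numerical_monoid_def by blast
  then have "val {#0#} \<in> exp_puiseux r N" "val {#0#} \<noteq> 0"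
    using val_in_exp_puiseux[of "{#0#}" N] by (simp_all del: val_add_mset)
  then obtain a where "a \<in> atoms (exp_puiseux r N)"
    using atomic unfolding atomic_def is_unit_in_exp_puiseux_iff by (metis multiset_nonemptyE subsetD)
  then obtain k where a: "a = r ^ k" "a \<in> atoms (exp_puiseux r N)" using atoms_exp_puiseux_subset by blast
  define m where "m = Suc B"
  define q where "q = d ^ m"
  have "1 < q" unfolding q_def m_def using denom_ge_2 one_less_power[of d "Suc B"] by linarith
  have "r ^ k = of_nat q * r ^ (k + m)" using denom_times_power[of m k] assms(1) unfolding q_def by simp
  also have "\<dots> = val {#k + m#} + val (replicate_mset (q - 1) (k + m))"
    using \<open>1 < q\<close> by (simp add: of_nat_diff algebra_simps)
  finally have "a = val {#k + m#} + val (replicate_mset (q - 1) (k + m))" using a(1) by simp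
  moreover have "val {#k + m#} \<in> exp_puiseux r N" "val (replicate_mset (q - 1) (k + m)) \<in> exp_puiseux r N"
    using B[of "k + m"] val_in_exp_puiseux unfolding m_def by (simp_all del: val_add_mset val_replicate_mset)
  moreover have "val {#k + m#} \<noteq> 0" "val (replicate_mset (q - 1) (k + m)) \<noteq> 0"
    using \<open>1 < q\<close> r_pos by simp_all
  ultimately show False using a(2) unfolding atoms_exp_puiseux_iff by blast
qed

theorem card_Delta_exp_puiseux_eq_1_iff:
  assumes "numerical_monoid N" "atomic (exp_puiseux r N)"
  shows "card (Delta (exp_puiseux r N)) = 1 \<longleftrightarrow> N = UNIV"
proof
  have "2 \<le> n" using not_atomic_if_numer_eq_1 assms numer_pos by fastforce
  show "N = UNIV" if card: "card (Delta (exp_puiseux r N)) = 1"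
  proof (rule ccontr)
    assume "N \<noteq> UNIV"
    then have "1 \<notin> N" using numerical_monoid_one_iff[OF assms(1)] by blast
    obtain B where B: "\<And>j. B \<le> j \<Longrightarrow> j \<in> N" using numerical_monoid_cofinite[OF assms(1)] by blast
    have "0 \<in> N" using assms(1) unfolding numerical_monoid_def by blast
    then obtain e where "e \<in> Delta (exp_puiseux r N)" "e \<noteq> \<delta>"
      using other_distance_in_Delta[OF \<open>2 \<le> n\<close> _ \<open>1 \<notin> N\<close> B[of "Suc B"]] by auto
    moreover have "\<delta> \<in> Delta (exp_puiseux r N)" using \<delta>_in_Delta[OF \<open>2 \<le> n\<close>, of B] B by simp
    ultimately show False using card by (metis card_1_singletonE singletonD)
  qed
  show "card (Delta (exp_puiseux r N)) = 1" if "N = UNIV"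
    using Delta_exp_puiseux_UNIV[OF \<open>2 \<le> n\<close>] that by simp
qed

end

lemma puiseux_ratio_of_rat:
  fixes r :: rat
  assumes "0 < r" "r \<notin> \<nat>"
  obtains n d where "puiseux_ratio n d r"
proof -
  obtain p q where pq: "quotient_of r = (p, q)" by (cases "quotient_of r")
  have "0 < q" "coprime p q" "r = of_int p / of_int q"
    using quotient_of_denom_pos[OF pq] quotient_of_coprime[OF pq] quotient_of_div[OF pq] by auto
  moreover have "0 < p" using calculation assms(1) by (simp add: zero_less_divide_iff)
  moreover have "q \<noteq> 1"
  proof
    assume "q = 1"
    then have "r = of_nat (nat p)" using calculation by simp
    with assms(2) show False by (metis of_nat_in_Nats)
  qed
  ultimately have "puiseux_ratio (nat p) (nat q) r"
    by unfold_locales (auto simp: coprime_int_iff[symmetric])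
  then show thesis by (rule that)
qed

theorem mainTheorem11:
  fixes r :: rat and N :: "nat set"
  assumes "r > 0" and "r \<notin> \<nat>" and "numerical_monoid N"
    and "atomic (exp_puiseux r N)"
  shows "card (Delta (exp_puiseux r N)) = 1 \<longleftrightarrow> N = UNIV"
proof -
  obtain n d where "puiseux_ratio n d r" using puiseux_ratio_of_rat assms(1,2) by blast
  then show ?thesis using puiseux_ratio.card_Delta_exp_puiseux_eq_1_iff assms(3,4) by blast
qed

end
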